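(* Let $S$ be a finite set of size $n$ and let $\mathcal{Y}$ be the set of all pairs $(+,* )$ of binary operations on $S$ such that $(S,+,* )$ is a ring. Then there exists a query-algorithm with respect to $\mathcal{Y}$, in which each query asks either for $x+y$ or for $x*y$ for a chosen pair $(x,y)\in S^2$, which recovers both operations (i.e. distinct elements of $\mathcal{Y}$ lead to distinct leaves and each leaf corresponds to exactly one element of $\mathcal{Y}$) and uses at most \[n+(\log_2 n)^2\] queries for every $(+,* )\in\mathcal{Y}$.
   Context: A query-algorithm for a set $\mathcal{Y}$ of pairs $(+,* )$ of binary operations on a finite set $S$ is a rooted tree whose non-leaf nodes $v$ are labeled by a query of the form "$x_v+y_v$" or "$x_v*y_v$" with $(x_v,y_v)\in S^2$, whose leaves are unlabeled, and whose edges from a node to its children are labeled by pairwise distinct elements of $S$ (possible answers); for every $(+,* )\in\mathcal{Y}$ there must be a root-to-leaf path in which each edge leaving a node $v$ is labeled with the true value of the query at $v$ under $(+,* )$. This leaf $L(+,* )$ is unique, and the algorithm solves product-recovering if $L$ is a bijection from $\mathcal{Y}$ to the set of leaves. The number of queries used on $(+,* )$ is the depth of $L(+,* )$. *)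

theory Defs
  imports Complex_Main "HOL-Algebra.Ring"
begin

text \<open>Query-algorithms. A node asks either x+y (flag True) or x*y (flag False);
  its children are given by a partial map from answers (pairwise distinct
  elements of S) to subtrees.\<close>

datatype 'a qtree = Leaf | Query bool 'a 'a "'a \<Rightarrow> 'a qtree option"

type_synonym 'a ops = "('a \<Rightarrow> 'a \<Rightarrow> 'a) \<times> ('a \<Rightarrow> 'a \<Rightarrow> 'a)"

definition answer :: "bool \<Rightarrow> 'a \<Rightarrow> 'a \<Rightarrow> 'a ops \<Rightarrow> 'a" where
  "answer b x y opr = (if b then fst opr x y else snd opr x y)"

text \<open>Leaves are identified with the (unique) sequence of edge labels from the root.\<close>
inductive leaf_path :: "'a qtree \<Rightarrow> 'a list \<Rightarrow> bool" where
  "leaf_path Leaf []"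
| "ch v = Some t \<Longrightarrow> leaf_path t ps \<Longrightarrow> leaf_path (Query b x y ch) (v # ps)"

inductive reaches :: "'a qtree \<Rightarrow> 'a ops \<Rightarrow> 'a list \<Rightarrow> bool" where
  "reaches Leaf opr []"
| "ch (answer b x y opr) = Some t \<Longrightarrow> reaches t opr ps \<Longrightarrow>
     reaches (Query b x y ch) opr (answer b x y opr # ps)"

definition leaf_of :: "'a qtree \<Rightarrow> 'a ops \<Rightarrow> 'a list" where
  "leaf_of T opr = (THE ps. reaches T opr ps)"

definition product_recovering :: "'a qtree \<Rightarrow> 'a ops set \<Rightarrow> bool" where
  "product_recovering T Y \<longleftrightarrow>
     (\<forall>opr\<in>Y. \<exists>ps. reaches T opr ps) \<and>
     bij_betw (leaf_of T) Y {ps. leaf_path T ps}"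

definition queries_used :: "'a qtree \<Rightarrow> 'a ops \<Rightarrow> nat" where
  "queries_used T opr = length (leaf_of T opr)"

text \<open>All pairs (+,*) of binary operations on the whole (finite) type making it a
  ring (associative, with identity) in the sense of HOL-Algebra.\<close>
definition ring_ops :: "'a ops set" where
  "ring_ops = {(p, m). \<exists>z u. ring \<lparr>carrier = UNIV, mult = m, one = u, zero = z, add = p\<rparr>}"

end

theory Submission
  imports Defs
begin

text \<open>
  We unfold an explicit adaptive strategy into a query tree.  The strategy first learns the
  additive group with about \<open>n\<close> addition queries: it follows the multiples \<open>g, 2\<cdot>g, \<dots>\<close> of an
  arbitrary element until they return, which reveals zero and a cyclic subgroup, and then
  repeatedly enlarges a known subgroup \<open>H\<close> by listing the cosets \<open>H + g, H + 2\<cdot>g, \<dots>\<close> of an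
  element \<open>g \<notin> H\<close>, one new element per query, until they return into \<open>H\<close>.  Every new
  subgroup is at least twice as big, so at most \<open>log\<^sub>2 n\<close> generators are needed, and the
  strategy finally asks the \<open>(log\<^sub>2 n)\<^sup>2\<close> products of pairs of generators, which determine
  the multiplication by distributivity.
\<close>

subsection \<open>From an adaptive strategy to a query tree\<close>

text \<open>An adaptive strategy is given by a state space, a function \<open>Q\<close> choosing the next
  query in a state (\<open>None\<close> = stop) and a function \<open>U\<close> updating the state with the answer.\<close>

fun strategy_tree :: "('s \<Rightarrow> (bool \<times> 'a \<times> 'a) option) \<Rightarrow> ('s \<Rightarrow> 'a \<Rightarrow> 's) \<Rightarrow> nat \<Rightarrow> 's
    \<Rightarrow> 'a ops set \<Rightarrow> 'a qtree" where
  "strategy_tree Q U 0 s Y = Leaf"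
| "strategy_tree Q U (Suc F) s Y = (case Q s of None \<Rightarrow> Leaf | Some (b, x, y) \<Rightarrow>
     Query b x y (\<lambda>v. if v \<in> answer b x y ` Y
        then Some (strategy_tree Q U F (U s v) {r\<in>Y. answer b x y r = v}) else None))"

fun strategy_path :: "('s \<Rightarrow> (bool \<times> 'a \<times> 'a) option) \<Rightarrow> ('s \<Rightarrow> 'a \<Rightarrow> 's) \<Rightarrow> nat \<Rightarrow> 's
    \<Rightarrow> 'a ops \<Rightarrow> 'a list" where
  "strategy_path Q U 0 s r = []"
| "strategy_path Q U (Suc F) s r = (case Q s of None \<Rightarrow> [] | Some (b, x, y) \<Rightarrow>
     answer b x y r # strategy_path Q U F (U s (answer b x y r)) r)"

fun strategy_end :: "('s \<Rightarrow> (bool \<times> 'a \<times> 'a) option) \<Rightarrow> ('s \<Rightarrow> 'a \<Rightarrow> 's) \<Rightarrow> nat \<Rightarrow> 's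
    \<Rightarrow> 'a ops \<Rightarrow> 's" where
  "strategy_end Q U 0 s r = s"
| "strategy_end Q U (Suc F) s r = (case Q s of None \<Rightarrow> s | Some (b, x, y) \<Rightarrow>
     strategy_end Q U F (U s (answer b x y r)) r)"

lemma reaches_unique: "reaches T r ps \<Longrightarrow> reaches T r ps' \<Longrightarrow> ps = ps'"
proof (induction arbitrary: ps' rule: reaches.induct)
  case (1 opr) then show ?case by (auto elim: reaches.cases)
next
  case (2 ch b x y opr t ps)
  from 2(4) show ?case by (cases rule: reaches.cases) (use 2 in auto)
qed

lemma reaches_leaf_path: "reaches T r ps \<Longrightarrow> leaf_path T ps"
  by (induction rule: reaches.induct) (auto intro: leaf_path.intros)

lemma leaf_of_eq: "reaches T r ps \<Longrightarrow> leaf_of T r = ps"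
  unfolding leaf_of_def using reaches_unique by blast

lemma strategy_tree_reaches:
  "r \<in> Y \<Longrightarrow> reaches (strategy_tree Q U F s Y) r (strategy_path Q U F s r)"
proof (induction F arbitrary: s Y)
  case 0 then show ?case by (simp add: reaches.intros)
next
  case (Suc F)
  show ?case
  proof (cases "Q s")
    case (Some q)
    moreover obtain b x y where "q = (b, x, y)" by (cases q)
    moreover have "reaches (strategy_tree Q U F (U s (answer b x y r)) {r'\<in>Y. answer b x y r' = answer b x y r})
        r (strategy_path Q U F (U s (answer b x y r)) r)" using Suc by auto
    ultimately show ?thesis using Suc.prems by (auto intro!: reaches.intros(2))
  qed (simp add: reaches.intros)
qed

lemma strategy_tree_leaf_path:
  assumes "leaf_path (strategy_tree Q U F s Y) ps" "Y \<noteq> {}"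
  shows "\<exists>r\<in>Y. strategy_path Q U F s r = ps"
  using assms
proof (induction F arbitrary: s Y ps)
  case 0 then show ?case by (auto elim: leaf_path.cases)
next
  case (Suc F)
  show ?case
  proof (cases "Q s")
    case None then show ?thesis using Suc.prems by (auto elim: leaf_path.cases)
  next
    case (Some q)
    obtain b x y where q: "q = (b, x, y)" by (cases q)
    define Y' where "Y' v = {r\<in>Y. answer b x y r = v}" for v
    define ch where "ch = (\<lambda>v. if v \<in> answer b x y ` Y
        then Some (strategy_tree Q U F (U s v) (Y' v)) else None)"
    have "leaf_path (Query b x y ch) ps"
      using Suc.prems(1) Some q unfolding ch_def Y'_def by simp
    then obtain v t ps' where ps: "ps = v # ps'" and "ch v = Some t" and "leaf_path t ps'"
      by (cases rule: leaf_path.cases) auto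
    then have v: "v \<in> answer b x y ` Y"
      and leaf: "leaf_path (strategy_tree Q U F (U s v) (Y' v)) ps'"
      by (auto simp: ch_def split: if_splits)
    from v have "Y' v \<noteq> {}" by (auto simp: Y'_def)
    from Suc.IH[OF leaf this] obtain r where r: "r \<in> Y" "answer b x y r = v"
      and path: "strategy_path Q U F (U s v) r = ps'"
      by (auto simp: Y'_def)
    have "strategy_path Q U (Suc F) s r = answer b x y r # strategy_path Q U F (U s (answer b x y r)) r"
      using Some q by simp
    then show ?thesis using r path ps by auto
  qed
qed

lemma strategy_tree_recovering:
  fixes Q :: "'s \<Rightarrow> (bool \<times> 'a \<times> 'a) option" and U F s and Y :: "'a ops set"
  defines "T \<equiv> strategy_tree Q U (Suc F) s Y"
  assumes inj: "inj_on (strategy_path Q U (Suc F) s) Y" and start: "Q s \<noteq> None"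
  shows "product_recovering T Y"
    and "\<And>r. r \<in> Y \<Longrightarrow> queries_used T r = length (strategy_path Q U (Suc F) s r)"
proof -
  have leaf_of: "leaf_of T r = strategy_path Q U (Suc F) s r" if "r \<in> Y" for r
    unfolding T_def using that by (rule leaf_of_eq[OF strategy_tree_reaches])
  then show "queries_used T r = length (strategy_path Q U (Suc F) s r)" if "r \<in> Y" for r
    using that by (simp add: queries_used_def)
  have "leaf_of T ` Y = {ps. leaf_path T ps}"
  proof (intro equalityI subsetI)
    fix ps assume "ps \<in> leaf_of T ` Y"
    then obtain r where "r \<in> Y" "ps = leaf_of T r" by blast
    then show "ps \<in> {ps. leaf_path T ps}"
      using reaches_leaf_path[OF strategy_tree_reaches] leaf_of unfolding T_def
      by (simp del: strategy_tree.simps strategy_path.simps)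
  next
    fix ps assume "ps \<in> {ps. leaf_path T ps}"
    then have ps: "leaf_path T ps" by simp
    have "Y \<noteq> {}"
    proof
      assume "Y = {}"
      moreover obtain b x y where "Q s = Some (b, x, y)" using start by auto
      ultimately have "T = Query b x y (\<lambda>v. None)" by (simp add: T_def)
      then show False using ps by (auto elim: leaf_path.cases)
    qed
    with ps obtain r where "r \<in> Y" "strategy_path Q U (Suc F) s r = ps"
      using strategy_tree_leaf_path[of Q U "Suc F" s Y ps] unfolding T_def by blast
    then show "ps \<in> leaf_of T ` Y" using leaf_of by (metis image_eqI)
  qed
  moreover have "inj_on (leaf_of T) Y"
  proof (rule inj_onI)
    fix r r' assume "r \<in> Y" "r' \<in> Y" "leaf_of T r = leaf_of T r'"
    then show "r = r'" using inj leaf_of by (metis inj_onD)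
  qed
  moreover have "\<forall>r\<in>Y. \<exists>ps. reaches T r ps"
  proof
    fix r assume "r \<in> Y"
    show "\<exists>ps. reaches T r ps"
      unfolding T_def by (rule exI, rule strategy_tree_reaches[OF \<open>r \<in> Y\<close>])
  qed
  ultimately show "product_recovering T Y"
    unfolding product_recovering_def bij_betw_def by blast
qed

lemma strategy_run_length:
  fixes \<mu> :: "'s \<Rightarrow> nat"
  assumes "I s"
    and step: "\<And>s b x y. I s \<Longrightarrow> Q s = Some (b, x, y)
      \<Longrightarrow> I (U s (answer b x y r)) \<and> \<mu> (U s (answer b x y r)) < \<mu> s"
  shows "length (strategy_path Q U F s r) \<le> \<mu> s"
  using assms(1)
proof (induction F arbitrary: s)
  case (Suc F)
  show ?case
  proof (cases "Q s")
    case (Some q)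
    then obtain b x y where "Q s = Some (b, x, y)" by (cases q) auto
    with step[OF Suc.prems this] Suc.IH show ?thesis by fastforce
  qed simp
qed simp

lemma strategy_run_stops:
  fixes \<mu> :: "'s \<Rightarrow> nat"
  assumes "I s" and "\<mu> s \<le> F"
    and step: "\<And>s b x y. I s \<Longrightarrow> Q s = Some (b, x, y)
      \<Longrightarrow> I (U s (answer b x y r)) \<and> \<mu> (U s (answer b x y r)) < \<mu> s"
  shows "Q (strategy_end Q U F s r) = None"
  using assms(1,2)
proof (induction F arbitrary: s)
  case 0
  show ?case
  proof (cases "Q s")
    case (Some q)
    then obtain b x y where "Q s = Some (b, x, y)" by (cases q) auto
    from step[OF 0(1) this] 0(2) show ?thesis by simp
  qed simp
next
  case (Suc F)
  show ?case
  proof (cases "Q s")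
    case (Some q)
    then obtain b x y where "Q s = Some (b, x, y)" by (cases q) auto
    with step[OF Suc.prems(1) this] Suc.prems(2) Suc.IH show ?thesis by simp
  qed simp
qed

text \<open>Two candidates with the same answer sequence drive the strategy through the same states,
  so any relation between them that every common step preserves holds at the end.\<close>

lemma strategy_common_run:
  assumes "strategy_path Q U F s r1 = strategy_path Q U F s r2" and "P s"
    and step: "\<And>s b x y. P s \<Longrightarrow> Q s = Some (b, x, y) \<Longrightarrow> answer b x y r1 = answer b x y r2
      \<Longrightarrow> P (U s (answer b x y r1))"
  shows "P (strategy_end Q U F s r1) \<and> strategy_end Q U F s r1 = strategy_end Q U F s r2"
  using assms(1,2)
proof (induction F arbitrary: s)
  case (Suc F)
  show ?case
  proof (cases "Q s")
    case (Some q)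
    then obtain b x y where q: "Q s = Some (b, x, y)" by (cases q) auto
    with Suc.prems have same: "answer b x y r1 = answer b x y r2" by simp
    with Suc.prems q have "strategy_path Q U F (U s (answer b x y r1)) r1
        = strategy_path Q U F (U s (answer b x y r1)) r2" by simp
    note IH = Suc.IH[OF this step[OF Suc.prems(2) q same]]
    have "strategy_end Q U (Suc F) s r1 = strategy_end Q U F (U s (answer b x y r1)) r1"
      and "strategy_end Q U (Suc F) s r2 = strategy_end Q U F (U s (answer b x y r1)) r2"
      using q same by simp_all
    then show ?thesis using IH by metis
  qed (use Suc.prems in simp)
qed simp


subsection \<open>Finite abelian groups and rings given by bare operations\<close>

text \<open>The additive group of a ring on a finite type, described only by its operation \<open>p\<close>
  and neutral element \<open>z\<close>; this is all that the query strategy uses about addition.\<close>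

locale fin_comm_group =
  fixes p :: "'a::finite \<Rightarrow> 'a \<Rightarrow> 'a" and z :: 'a
  assumes assoc: "p (p x y) w = p x (p y w)"
    and comm: "p x y = p y x"
    and left_zero: "p z x = x"
    and left_inverse: "\<exists>y. p y x = z"

locale fin_ring = fin_comm_group +
  fixes m :: "'a::finite \<Rightarrow> 'a \<Rightarrow> 'a"
  assumes left_distrib: "m (p x y) w = p (m x w) (m y w)"
    and right_distrib: "m w (p x y) = p (m w x) (m w y)"

lemma ring_ops_fin_ring:
  assumes "(p, m) \<in> (ring_ops :: ('a::finite) ops set)"
  shows "\<exists>z. fin_ring p z m"
proof -
  from assms obtain z u
    where "ring \<lparr>carrier = (UNIV::'a set), mult = m, one = u, zero = z, add = p\<rparr>"
    unfolding ring_ops_def by auto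
  then interpret R: ring "\<lparr>carrier = (UNIV::'a set), mult = m, one = u, zero = z, add = p\<rparr>" .
  have "fin_ring p z m"
  proof
    fix x y w :: 'a
    show "p (p x y) w = p x (p y w)" using R.a_assoc[of x y w] by simp
    show "p x y = p y x" using R.a_comm[of x y] by simp
    show "p z x = x" using R.l_zero[of x] by simp
    show "\<exists>y. p y x = z" using R.l_neg[of x] by (intro exI) simp
    show "m (p x y) w = p (m x w) (m y w)" using R.l_distr[of x y w] by simp
    show "m w (p x y) = p (m w x) (m w y)" using R.r_distr[of x y w] by simp
  qed
  then show ?thesis by blast
qed

definition multiple :: "('a \<Rightarrow> 'a \<Rightarrow> 'a) \<Rightarrow> 'a \<Rightarrow> nat \<Rightarrow> 'a \<Rightarrow> 'a" where
  "multiple p z k g = ((\<lambda>x. p x g) ^^ k) z"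

lemma multiple_0 [simp]: "multiple p z 0 g = z"
  by (simp add: multiple_def)

lemma multiple_Suc: "multiple p z (Suc k) g = p (multiple p z k g) g"
  by (simp add: multiple_def)

inductive_set span :: "('a \<Rightarrow> 'a \<Rightarrow> 'a) \<Rightarrow> 'a \<Rightarrow> 'a set \<Rightarrow> 'a set" for p z G where
  span_zero: "z \<in> span p z G"
| span_gen: "g \<in> G \<Longrightarrow> g \<in> span p z G"
| span_add: "x \<in> span p z G \<Longrightarrow> y \<in> span p z G \<Longrightarrow> p x y \<in> span p z G"

lemma span_mono: "x \<in> span p z G \<Longrightarrow> G \<subseteq> G' \<Longrightarrow> x \<in> span p z G'"
  by (induction rule: span.induct) (auto intro: span.intros)

lemma span_multiple: "g \<in> span p z G \<Longrightarrow> multiple p z k g \<in> span p z G"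
  by (induction k) (auto simp: multiple_Suc intro: span.intros)

context fin_comm_group begin

abbreviation nsum :: "nat \<Rightarrow> 'a \<Rightarrow> 'a" where "nsum k g \<equiv> multiple p z k g"

lemma right_zero [simp]: "p x z = x"
  using comm[of x z] left_zero[of x] by simp

declare left_zero [simp]

lemma left_commute: "p x (p y w) = p y (p x w)"
  by (metis assoc comm)

lemmas ac = assoc comm left_commute

lemma cancel_left: "p x y = p x y' \<Longrightarrow> y = y'"
proof -
  assume eq: "p x y = p x y'"
  obtain i where i: "p i x = z" using left_inverse by blast
  have "y = p (p i x) y" by (simp add: i)
  also have "\<dots> = p (p i x) y'" by (simp add: assoc eq)
  also have "\<dots> = y'" by (simp add: i)
  finally show ?thesis .
qed

lemma cancel_right: "p y x = p y' x \<Longrightarrow> y = y'"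
  using cancel_left[of x y y'] comm[of y x] comm[of y' x] by simp

lemma zero_unique: "(\<And>x. p z' x = x) \<Longrightarrow> z' = z"
  by (metis right_zero)

lemma nsum_add: "nsum (a + b) g = p (nsum a g) (nsum b g)"
  by (induction b) (simp_all add: multiple_Suc assoc)

lemma nsum_order: "\<exists>q>0. nsum q g = z"
proof -
  let ?n = "card (UNIV :: 'a set)"
  have "\<not> inj_on (\<lambda>k. nsum k g) {..?n}"
  proof
    assume "inj_on (\<lambda>k. nsum k g) {..?n}"
    then have "card ((\<lambda>k. nsum k g) ` {..?n}) = Suc ?n" by (simp add: card_image)
    moreover have "card ((\<lambda>k. nsum k g) ` {..?n}) \<le> ?n" by (rule card_mono) auto
    ultimately show False by simp
  qed
  then obtain a b where ab: "a < b" "nsum a g = nsum b g"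
    unfolding inj_on_def by (metis linorder_neq_iff)
  then have "p (nsum a g) (nsum (b - a) g) = p (nsum a g) z"
    using nsum_add[of a "b - a" g] by simp
  then have "nsum (b - a) g = z" by (rule cancel_left)
  with ab show ?thesis by (intro exI[of _ "b - a"]) simp
qed

lemma nsum_mod: "nsum j g = z \<Longrightarrow> nsum k g = nsum (k mod j) g"
proof -
  assume order: "nsum j g = z"
  have zero: "nsum (c * j) g = z" for c
    by (induction c) (simp_all add: nsum_add order)
  have "nsum k g = nsum ((k div j) * j + k mod j) g" by simp
  also have "\<dots> = nsum (k mod j) g" by (simp only: nsum_add zero left_zero)
  finally show ?thesis .
qed

lemma closed_nsum: "\<forall>x\<in>S. \<forall>y\<in>S. p x y \<in> S \<Longrightarrow> z \<in> S \<Longrightarrow> g \<in> S \<Longrightarrow> nsum k g \<in> S"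
  by (induction k) (auto simp: multiple_Suc)

text \<open>In a finite group a set closed under addition and containing \<open>z\<close> is a subgroup, so it
  contains the difference of any two of its elements.\<close>

lemma closed_difference:
  assumes closed: "\<forall>x\<in>S. \<forall>y\<in>S. p x y \<in> S" and "z \<in> S" and h: "h \<in> S" "h' \<in> S"
    and eq: "p h t = h'"
  shows "t \<in> S"
proof -
  obtain q where q: "q > 0" "nsum q h = z" using nsum_order by blast
  then have inv: "p (nsum (q - 1) h) h = z" by (metis Suc_diff_1 multiple_Suc)
  have "t = p (p (nsum (q - 1) h) h) t" by (simp only: inv left_zero)
  also have "\<dots> = p (nsum (q - 1) h) h'" by (simp add: assoc eq)
  finally show ?thesis using closed_nsum[OF closed \<open>z \<in> S\<close> h(1)] closed h(2) by simp
qed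

text \<open>Sums of elements \<open>h + k\<cdot>g\<close> with \<open>h\<close> in a set \<open>S\<close> and \<open>k \<le> j\<close> can be put back into this form
  using only addition in \<open>S\<close> and the element \<open>c = (j+1)\<cdot>g\<close>; this is why knowing addition on
  a subgroup \<open>S\<close> and the cosets \<open>S + g, \<dots>, S + j\<cdot>g\<close> determines addition on their union.\<close>

lemma coset_sum:
  assumes "k1 \<le> j" "k2 \<le> j"
  shows "p (p h1 (nsum k1 g)) (p h2 (nsum k2 g)) =
    (if k1 + k2 \<le> j then p (p h1 h2) (nsum (k1 + k2) g)
     else p (p (p h1 h2) (nsum (Suc j) g)) (nsum (k1 + k2 - Suc j) g))"
proof -
  have sum: "p (p h1 (nsum k1 g)) (p h2 (nsum k2 g)) = p (p h1 h2) (nsum (k1 + k2) g)"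
    by (simp add: nsum_add ac)
  show ?thesis
  proof (cases "k1 + k2 \<le> j")
    case False
    then have "k1 + k2 = Suc j + (k1 + k2 - Suc j)" by simp
    then have "nsum (k1 + k2) g = p (nsum (Suc j) g) (nsum (k1 + k2 - Suc j) g)"
      by (metis nsum_add)
    with False sum show ?thesis by (simp add: assoc)
  qed (simp add: sum)
qed

end

context fin_ring begin

lemma mult_zero_left [simp]: "m z y = z"
proof -
  have "p (m z y) (m z y) = p (m z y) z" by (metis left_distrib left_zero right_zero)
  then show ?thesis by (rule cancel_left)
qed

lemma mult_zero_right [simp]: "m y z = z"
proof -
  have "p (m y z) (m y z) = p (m y z) z" by (metis right_distrib left_zero right_zero)
  then show ?thesis by (rule cancel_left)
qed

end


subsection \<open>The query strategy\<close>

text \<open>The strategy runs through the following phases.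
  \<^item> \<open>Cycle C\<close>: \<open>C = [g, 2\<cdot>g, \<dots>, j\<cdot>g]\<close> for an arbitrary start element \<open>g\<close>; ask for \<open>j\<cdot>g + g\<close>.
    Once the answer lies in \<open>C\<close>, it is \<open>g\<close>, so \<open>j\<cdot>g\<close> is the zero and \<open>C\<close> the subgroup \<open>\<langle>g\<rangle>\<close>.
  \<^item> \<open>Cosets gens H g W\<close>: \<open>H\<close> lists a subgroup spanned by \<open>gens\<close>, starting with zero, and
    \<open>g \<notin> H\<close>; \<open>W\<close> lists \<open>H + g, H + 2\<cdot>g, \<dots>\<close> (in the order of \<open>H\<close>), each entry obtained by
    adding \<open>g\<close> to the entry \<open>|H|\<close> places earlier.  When a new coset would start inside \<open>H\<close>,
    the union of \<open>H\<close> and \<open>W\<close> is the subgroup spanned by \<open>gens @ [g]\<close>, at least twice as big.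
  \<^item> \<open>Products gens k\<close>: \<open>gens\<close> spans everything; ask the \<open>k\<close>-th product of two generators.
  \<^item> \<open>Finished gens\<close>.
  Every addition query reveals a new element, except one per subgroup found, while every
  subgroup found comes with one new element \<open>g\<close> for free; as the subgroups double,
  there are at most \<open>log\<^sub>2 n\<close> generators and hence at most \<open>(log\<^sub>2 n)\<^sup>2\<close> product queries.\<close>

datatype 'a phase =
    Cycle "'a list"
  | Cosets "'a list" "'a list" 'a "'a list"
  | Products "'a list" nat
  | Finished "'a list"

definition start_cosets :: "'a list \<Rightarrow> 'a list \<Rightarrow> 'a phase" where
  "start_cosets H gens = (if set H = UNIV then (if gens = [] then Finished [] else Products gens 0)
     else (let g = (SOME g. g \<notin> set H) in Cosets gens H g [g]))"

definition walk_base :: "'a list \<Rightarrow> 'a list \<Rightarrow> 'a" where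
  "walk_base H W = (if length W < length H then H ! length W else W ! (length W - length H))"

fun next_query :: "'a phase \<Rightarrow> (bool \<times> 'a \<times> 'a) option" where
  "next_query (Cycle C) = Some (True, last C, hd C)"
| "next_query (Cosets gens H g W) = Some (True, walk_base H W, g)"
| "next_query (Products gens k) = Some (False, List.product gens gens ! k)"
| "next_query (Finished gens) = None"

fun next_phase :: "'a phase \<Rightarrow> 'a \<Rightarrow> 'a phase" where
  "next_phase (Cycle C) a = (if a \<in> set C
     then start_cosets (last C # butlast C) (if length C = 1 then [] else [hd C])
     else Cycle (C @ [a]))"
| "next_phase (Cosets gens H g W) a = (if length W mod length H = 0 \<and> a \<in> set H
     then start_cosets (H @ W) (gens @ [g]) else Cosets gens H g (W @ [a]))"
| "next_phase (Products gens k) a = (if Suc k < length gens * length gens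
     then Products gens (Suc k) else Finished gens)"
| "next_phase (Finished gens) a = Finished gens"

definition log_budget :: "nat \<Rightarrow> nat" where
  "log_budget n = (nat \<lfloor>log 2 (real n)\<rfloor>)\<^sup>2"

lemma log_budget_ge: "2 ^ k \<le> n \<Longrightarrow> k * k \<le> log_budget n"
proof -
  assume "2 ^ k \<le> n"
  then have "2 powr real k \<le> real n" by (simp add: powr_realpow)
  moreover have "0 < n" using less_le_trans[OF _ \<open>2 ^ k \<le> n\<close>, of 0] by simp
  ultimately have "real k \<le> log 2 (real n)" by (simp add: le_log_iff)
  then have "k \<le> nat \<lfloor>log 2 (real n)\<rfloor>" by linarith
  then show "k * k \<le> log_budget n" unfolding log_budget_def by (simp add: power2_eq_square mult_le_mono)
qed

lemma log_budget_le: "1 \<le> n \<Longrightarrow> real (log_budget n) \<le> (log 2 (real n))\<^sup>2"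
proof -
  assume "1 \<le> n"
  then have "real (nat \<lfloor>log 2 (real n)\<rfloor>) \<le> log 2 (real n)" by simp
  then show ?thesis unfolding log_budget_def by (simp add: power_mono)
qed

text \<open>Number of questions the strategy may still ask: the elements not yet listed, plus the
  product budget (plus one for the first cycle, whose start element is known for free).\<close>

fun budget :: "('a::finite) phase \<Rightarrow> nat" where
  "budget (Cycle C) = card (UNIV :: 'a set) + log_budget (card (UNIV :: 'a set)) + 1 - length C"
| "budget (Cosets gens H g W) =
     card (UNIV :: 'a set) + log_budget (card (UNIV :: 'a set)) + 1 - (length H + length W)"
| "budget (Products gens k) = length gens * length gens - k"
| "budget (Finished gens) = 0"

definition listed_subgroup :: "('a \<Rightarrow> 'a \<Rightarrow> 'a) \<Rightarrow> 'a \<Rightarrow> 'a list \<Rightarrow> 'a list \<Rightarrow> bool" where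
  "listed_subgroup p z H gens \<longleftrightarrow> H \<noteq> [] \<and> hd H = z \<and> distinct H \<and>
     (\<forall>x\<in>set H. \<forall>y\<in>set H. p x y \<in> set H) \<and>
     2 ^ length gens \<le> length H \<and> set H \<subseteq> span p z (set gens)"

fun consistent :: "('a::finite \<Rightarrow> 'a \<Rightarrow> 'a) \<Rightarrow> 'a \<Rightarrow> 'a phase \<Rightarrow> bool" where
  "consistent p z (Cycle C) \<longleftrightarrow> C \<noteq> [] \<and> distinct C \<and>
     (\<forall>i<length C. C ! i = multiple p z (Suc i) (hd C))"
| "consistent p z (Cosets gens H g W) \<longleftrightarrow> listed_subgroup p z H gens \<and> W \<noteq> [] \<and>
     distinct (H @ W) \<and>
     (\<forall>q<length W. W ! q = p (H ! (q mod length H)) (multiple p z (q div length H + 1) g))"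
| "consistent p z (Products gens k) \<longleftrightarrow> span p z (set gens) = UNIV \<and>
     k < length gens * length gens \<and> 2 ^ length gens \<le> card (UNIV :: 'a set)"
| "consistent p z (Finished gens) \<longleftrightarrow> span p z (set gens) = UNIV"

lemma distinct_length_le_card: "distinct (xs :: ('a::finite) list) \<Longrightarrow> length xs \<le> card (UNIV :: 'a set)"
  by (metis card_mono distinct_card finite_UNIV subset_UNIV)

lemma div_pred: "0 < (L::nat) \<Longrightarrow> L div r = (if L mod r = 0 then Suc ((L - 1) div r) else (L - 1) div r)"
  using div_Suc[of "L - 1" r] by simp


subsection \<open>Running the strategy against one ring\<close>

context fin_comm_group begin

lemma start_cosets_consistent:
  assumes sub: "listed_subgroup p z H gens"
  shows "consistent p z (start_cosets H gens)"
    and "budget (start_cosets H gens)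
           \<le> card (UNIV :: 'a set) + log_budget (card (UNIV :: 'a set)) - length H"
proof -
  let ?n = "card (UNIV :: 'a set)"
  from sub have "H \<noteq> []" "hd H = z" "distinct H" "2 ^ length gens \<le> length H"
    and span: "set H \<subseteq> span p z (set gens)" unfolding listed_subgroup_def by auto
  then have H0: "H ! 0 = z" and small: "length H \<le> ?n" and gens: "2 ^ length gens \<le> ?n"
    using distinct_length_le_card[of H] by (auto simp: hd_conv_nth)
  have "consistent p z (start_cosets H gens) \<and> budget (start_cosets H gens) \<le> ?n + log_budget ?n - length H"
  proof (cases "set H = UNIV")
    case True
    with span have "span p z (set gens) = UNIV" by auto
    moreover have "length gens * length gens \<le> log_budget ?n" using gens by (rule log_budget_ge)
    ultimately show ?thesis using True gens small by (auto simp: start_cosets_def)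
  next
    case False
    define g where "g = (SOME g. g \<notin> set H)"
    have "g \<notin> set H" using False unfolding g_def by (metis (mono_tags) UNIV_eq_I someI_ex)
    then have "consistent p z (Cosets gens H g [g])" using sub \<open>distinct H\<close> H0 by (simp add: multiple_Suc)
    moreover have "start_cosets H gens = Cosets gens H g [g]"
      using False by (simp add: start_cosets_def g_def Let_def)
    ultimately show ?thesis by simp
  qed
  then show "consistent p z (start_cosets H gens)"
    and "budget (start_cosets H gens) \<le> ?n + log_budget ?n - length H" by auto
qed

text \<open>In the cycle phase, the last entry is \<open>j\<cdot>g\<close>; an answer \<open>(j+1)\<cdot>g\<close> already in the list
  can only be \<open>g\<close> itself, so then \<open>j\<cdot>g\<close> is zero.\<close>

lemma cycle_last:
  assumes "consistent p z (Cycle C)"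
  shows "last C = nsum (length C) (hd C)"
  using assms by (simp add: last_conv_nth)

lemma cycle_closes:
  assumes cyc: "consistent p z (Cycle C)" and returned: "p (last C) (hd C) \<in> set C"
  shows "nsum (length C) (hd C) = z"
proof -
  define g j where "g = hd C" and "j = length C"
  from cyc have "C \<noteq> []" "distinct C" and C: "\<And>i. i < j \<Longrightarrow> C ! i = nsum (Suc i) g"
    unfolding g_def j_def by auto
  have ans: "p (last C) (hd C) = nsum (Suc j) g"
    using cycle_last[OF cyc] by (simp add: multiple_Suc g_def j_def)
  obtain i where i: "i < j" "C ! i = nsum (Suc j) g"
    using returned by (auto simp: in_set_conv_nth j_def ans)
  have "i = 0"
  proof (rule ccontr)
    assume "i \<noteq> 0"
    with i C have "p (nsum i g) g = p (nsum j g) g" by (simp add: multiple_Suc)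
    then have "nsum i g = nsum j g" by (rule cancel_right)
    with C[of "i - 1"] C[of "j - 1"] \<open>i \<noteq> 0\<close> i have "C ! (i - 1) = C ! (j - 1)" by simp
    with \<open>distinct C\<close> i have "i - 1 = j - 1" by (simp add: nth_eq_iff_index_eq j_def)
    with i \<open>i \<noteq> 0\<close> show False by simp
  qed
  with i C[of 0] have "p z g = p (nsum j g) g" by (simp add: multiple_Suc)
  then show ?thesis unfolding g_def j_def by (rule cancel_right[symmetric])
qed

lemma cycle_set:
  assumes cyc: "consistent p z (Cycle C)" and order: "nsum (length C) (hd C) = z"
  shows "set C = range (\<lambda>k. nsum k (hd C))"
proof -
  define g j where "g = hd C" and "j = length C"
  from cyc have "j > 0" and C: "\<And>i. i < j \<Longrightarrow> C ! i = nsum (Suc i) g"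
    unfolding g_def j_def by auto
  have "nsum k g \<in> set C" for k
  proof (cases "k mod j = 0")
    case True
    then have "nsum k g = C ! (j - 1)"
      using nsum_mod[OF order[folded g_def j_def], of k] C[of "j - 1"] order \<open>j > 0\<close>
      by (simp add: g_def j_def)
    then show ?thesis using \<open>j > 0\<close> by (simp add: j_def)
  next
    case False
    moreover have "k mod j - 1 < j" using \<open>j > 0\<close> mod_less_divisor[of j k] by linarith
    ultimately have "nsum k g = C ! (k mod j - 1)"
      using nsum_mod[OF order[folded g_def j_def], of k] C[of "k mod j - 1"] by simp
    moreover have "k mod j - 1 < length C" using \<open>j > 0\<close> by (simp add: j_def less_imp_diff_less)
    ultimately show ?thesis by simp
  qed
  moreover have "set C \<subseteq> range (\<lambda>k. nsum k g)" using C by (auto simp: in_set_conv_nth j_def)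
  ultimately show ?thesis by (auto simp: g_def)
qed

lemma cycle_subgroup:
  assumes cyc: "consistent p z (Cycle C)" and order: "nsum (length C) (hd C) = z"
  shows "listed_subgroup p z (last C # butlast C) (if length C = 1 then [] else [hd C])"
proof -
  define g H gens where "g = hd C" and "H = last C # butlast C"
    and "gens = (if length C = 1 then [] else [hd C])"
  from cyc have "C \<noteq> []" "distinct C" by auto
  then have C: "butlast C @ [last C] = C" by simp
  have "set H = set (butlast C @ [last C])" "distinct H \<longleftrightarrow> distinct (butlast C @ [last C])"
    by (auto simp: H_def)
  then have setH: "set H = range (\<lambda>k. nsum k g)" and "distinct H"
    using cycle_set[OF cyc order] \<open>distinct C\<close> by (simp_all add: C g_def)
  have "length H = length C" using \<open>C \<noteq> []\<close> by (simp add: H_def)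
  moreover have "hd H = z" using cycle_last[OF cyc] order by (simp add: H_def)
  moreover have "p x y \<in> set H" if "x \<in> set H" "y \<in> set H" for x y
    using that unfolding setH by (auto simp: nsum_add[symmetric])
  moreover have "2 ^ length gens \<le> length H"
  proof (cases "length C = 1")
    case False
    with \<open>C \<noteq> []\<close> have "2 \<le> length C" by (cases C) (auto simp: Suc_le_eq)
    with False show ?thesis by (simp add: gens_def \<open>length H = length C\<close>)
  qed (simp add: gens_def \<open>length H = length C\<close>)
  moreover have "set H \<subseteq> span p z (set gens)"
  proof
    fix x assume "x \<in> set H"
    then obtain k where x: "x = nsum k g" unfolding setH by auto
    show "x \<in> span p z (set gens)"
    proof (cases "length C = 1")
      case True
      then have "x = z" using x nsum_mod[OF order, of k] by (simp add: g_def)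
      then show ?thesis by (simp add: span.intros)
    next
      case False
      then have "g \<in> span p z (set gens)" by (simp add: gens_def g_def span.intros)
      then show ?thesis unfolding x by (rule span_multiple)
    qed
  qed
  moreover have "H \<noteq> []" by (simp add: H_def)
  ultimately have "listed_subgroup p z H gens"
    using \<open>distinct H\<close> unfolding listed_subgroup_def by blast
  then show ?thesis by (simp only: H_def gens_def)
qed

lemma cycle_step:
  assumes cyc: "consistent p z (Cycle C)" and a: "a = p (last C) (hd C)"
  shows "consistent p z (next_phase (Cycle C) a) \<and> budget (next_phase (Cycle C) a) < budget (Cycle C)"
proof (cases "a \<in> set C")
  case True
  let ?H = "last C # butlast C" and ?gens = "if length C = 1 then [] else [hd C]"
  have sub: "listed_subgroup p z ?H ?gens"
    using cycle_subgroup[OF cyc cycle_closes[OF cyc]] True a by simp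
  have "length C \<le> card (UNIV :: 'a set)" using cyc by (simp add: distinct_length_le_card)
  moreover have "length ?H = length C" using cyc by simp
  ultimately show ?thesis using start_cosets_consistent[OF sub] True by simp
next
  case False
  have "consistent p z (Cycle (C @ [a]))"
    using cyc False a cycle_last[OF cyc] by (auto simp: nth_append multiple_Suc less_Suc_eq)
  moreover have "length (C @ [a]) \<le> card (UNIV :: 'a set)"
    using distinct_length_le_card[of "C @ [a]"] False cyc by simp
  ultimately show ?thesis using False by simp
qed

end


context fin_comm_group begin

lemma walk_entry:
  assumes cos: "consistent p z (Cosets gens H g W)"
    and "i < length H" "0 < k" "(k - 1) * length H + i < length W"
  shows "W ! ((k - 1) * length H + i) = p (H ! i) (nsum k g)"
proof -
  from assms(2) have "length H > 0" by linarith
  then have "((k - 1) * length H + i) mod length H = i" "((k - 1) * length H + i) div length H = k - 1"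
    using assms(2) by simp_all
  with cos assms(3,4) show ?thesis by simp
qed

lemma walk_base_eq:
  assumes cos: "consistent p z (Cosets gens H g W)"
  shows "walk_base H W = p (H ! (length W mod length H)) (nsum (length W div length H) g)"
proof (cases "length W < length H")
  case False
  define r L where "r = length H" and "L = length W"
  from cos have "r > 0" "L > 0" by (simp_all add: listed_subgroup_def r_def L_def)
  then have "L - r < L" by simp
  moreover have "(L - r) mod r = L mod r" "(L - r) div r + 1 = L div r"
    using False \<open>r > 0\<close> le_mod_geq[of r L] le_div_geq[of r L] by (simp_all add: r_def L_def)
  ultimately show ?thesis using cos False by (simp add: walk_base_def r_def L_def)
qed (simp add: walk_base_def)

lemma walk_answer:
  assumes "consistent p z (Cosets gens H g W)"
  shows "p (walk_base H W) g = p (H ! (length W mod length H)) (nsum (Suc (length W div length H)) g)"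
  using walk_base_eq[OF assms] by (simp add: assoc multiple_Suc)

text \<open>Since each coset started so far begins with a multiple of \<open>g\<close>, these multiples lie
  outside \<open>H\<close>.\<close>

lemma walk_multiples_outside:
  assumes cos: "consistent p z (Cosets gens H g W)"
    and d: "1 \<le> d" "d \<le> (length W - 1) div length H + 1"
  shows "nsum d g \<notin> set H"
proof -
  define r L where "r = length H" and "L = length W"
  from cos have "r > 0" "L > 0" "H ! 0 = z" and disjoint: "set H \<inter> set W = {}"
    by (auto simp: listed_subgroup_def r_def L_def hd_conv_nth)
  have "d - 1 \<le> (L - 1) div r" using d by (simp add: r_def L_def)
  then have "(d - 1) * r \<le> ((L - 1) div r) * r" by (rule mult_le_mono1)
  also have "\<dots> \<le> L - 1" by (rule div_times_less_eq_dividend)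
  finally have q: "(d - 1) * r + 0 < L" using \<open>L > 0\<close> by linarith
  then have "W ! ((d - 1) * r + 0) = nsum d g"
    using walk_entry[OF cos _ _ q[unfolded r_def L_def]] \<open>r > 0\<close> \<open>H ! 0 = z\<close> d
    by (simp add: r_def)
  with q have "nsum d g \<in> set W" by (metis L_def nth_mem)
  with disjoint show ?thesis by blast
qed

lemma walk_members:
  assumes cos: "consistent p z (Cosets gens H g W)" and full: "length W mod length H = 0"
  shows "set (H @ W) = {p h (nsum k g) | h k. h \<in> set H \<and> k \<le> length W div length H}"
proof -
  define r L j where "r = length H" and "L = length W" and "j = length W div length H"
  from cos have "r > 0" by (simp add: listed_subgroup_def r_def)
  have L: "L = j * r" using full div_mult_mod_eq[of L r] by (simp add: r_def L_def j_def)
  have listed: "p h (nsum k g) \<in> set (H @ W)" if h: "h \<in> set H" and k: "k \<le> j" for h k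
  proof (cases "k = 0")
    case False
    obtain i where i: "i < r" "H ! i = h" using h by (auto simp: r_def in_set_conv_nth)
    have "(k - 1) * r + i < k * r" using i False by (cases k) auto
    also have "\<dots> \<le> L" using mult_le_mono1[OF k, of r] L by simp
    finally have q: "(k - 1) * r + i < L" .
    with False have "W ! ((k - 1) * r + i) = p h (nsum k g)"
      using walk_entry[OF cos i(1)[unfolded r_def]] i(2) by (simp add: r_def L_def)
    moreover have "W ! ((k - 1) * r + i) \<in> set W" using q by (simp add: L_def)
    ultimately show ?thesis by simp
  qed (use h in simp)
  have decomposed: "\<exists>h k. y = p h (nsum k g) \<and> h \<in> set H \<and> k \<le> j" if "y \<in> set (H @ W)" for y
  proof (cases "y \<in> set H")
    case True then show ?thesis by (intro exI[of _ y] exI[of _ 0]) simp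
  next
    case False
    with that obtain q where q: "q < L" "y = W ! q" by (auto simp: in_set_conv_nth L_def)
    then have "q div r < j" using L by (simp add: less_mult_imp_div_less)
    moreover have "H ! (q mod r) \<in> set H" using \<open>r > 0\<close> by (simp add: r_def)
    moreover have "y = p (H ! (q mod r)) (nsum (q div r + 1) g)" using cos q by (simp add: r_def L_def)
    ultimately show ?thesis by (intro exI[of _ "H ! (q mod r)"] exI[of _ "q div r + 1"]) simp
  qed
  show ?thesis unfolding j_def[symmetric]
  proof (intro equalityI subsetI)
    fix y assume "y \<in> set (H @ W)"
    with decomposed show "y \<in> {p h (nsum k g) | h k. h \<in> set H \<and> k \<le> j}" by simp
  next
    fix y assume "y \<in> {p h (nsum k g) | h k. h \<in> set H \<and> k \<le> j}"
    with listed show "y \<in> set (H @ W)" by blast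
  qed
qed

text \<open>If a new coset would start inside \<open>H\<close>, i.e. \<open>(j+1)\<cdot>g \<in> H\<close>, the union of \<open>H\<close> and the
  walk is closed under addition (by \<open>coset_sum\<close>), so it is the subgroup spanned
  by the generators and \<open>g\<close>, and it is at least twice as big as \<open>H\<close>.\<close>

lemma walk_union_closed:
  assumes cos: "consistent p z (Cosets gens H g W)" and full: "length W mod length H = 0"
    and inside: "p (walk_base H W) g \<in> set H"
  shows "\<forall>x\<in>set (H @ W). \<forall>y\<in>set (H @ W). p x y \<in> set (H @ W)"
proof (intro ballI)
  define j where "j = length W div length H"
  from cos have H0: "H ! 0 = z" and closed: "\<forall>x\<in>set H. \<forall>y\<in>set H. p x y \<in> set H"
    by (auto simp: listed_subgroup_def hd_conv_nth)
  have c: "nsum (Suc j) g \<in> set H" using inside walk_answer[OF cos] full H0 by (simp add: j_def)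
  note members = walk_members[OF cos full, folded j_def]
  have listed: "p h (nsum k g) \<in> set (H @ W)" if "h \<in> set H" "k \<le> j" for h k
    unfolding members using that by blast
  fix u v assume "u \<in> set (H @ W)" "v \<in> set (H @ W)"
  then obtain h1 k1 h2 k2 where u: "h1 \<in> set H" "k1 \<le> j" "u = p h1 (nsum k1 g)"
    and v: "h2 \<in> set H" "k2 \<le> j" "v = p h2 (nsum k2 g)" unfolding members by blast
  have "p h1 h2 \<in> set H" "p (p h1 h2) (nsum (Suc j) g) \<in> set H" using closed c u v by auto
  moreover have "k1 + k2 - Suc j \<le> j" using u v by simp
  ultimately show "p u v \<in> set (H @ W)"
    unfolding u(3) v(3) coset_sum[OF u(2) v(2)] using listed by simp
qed

lemma walk_closes:
  assumes cos: "consistent p z (Cosets gens H g W)" and full: "length W mod length H = 0"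
    and inside: "p (walk_base H W) g \<in> set H"
  shows "listed_subgroup p z (H @ W) (gens @ [g])"
proof -
  from cos have sub: "listed_subgroup p z H gens" and "W \<noteq> []" "distinct (H @ W)" by auto
  then have "H \<noteq> []" "hd H = z" "2 ^ length gens \<le> length H" and span: "set H \<subseteq> span p z (set gens)"
    by (auto simp: listed_subgroup_def)
  have g: "g \<in> span p z (set (gens @ [g]))" by (simp add: span.intros)
  have "y \<in> span p z (set (gens @ [g]))" if "y \<in> set (H @ W)" for y
  proof -
    from that obtain h k where "h \<in> set H" "y = p h (nsum k g)"
      unfolding walk_members[OF cos full] by blast
    with span have "h \<in> span p z (set (gens @ [g]))" and y: "y = p h (nsum k g)"
      using span_mono[of h p z "set gens" "set (gens @ [g])"] by auto
    then show ?thesis using span_add[OF _ span_multiple[OF g]] by simp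
  qed
  moreover have "length H \<le> length W"
  proof -
    have "length W = (length W div length H) * length H" using full div_mult_mod_eq[of "length W" "length H"] by simp
    moreover have "length W div length H \<noteq> 0" using calculation \<open>W \<noteq> []\<close> by (metis length_0_conv mult_0)
    ultimately show ?thesis by (metis le_add1 mult.commute mult_le_mono2 mult_1_right Suc_leI neq0_conv One_nat_def)
  qed
  moreover note walk_union_closed[OF cos full inside]
  ultimately show ?thesis using \<open>H \<noteq> []\<close> \<open>hd H = z\<close> \<open>distinct (H @ W)\<close> \<open>2 ^ length gens \<le> length H\<close>
    unfolding listed_subgroup_def by auto
qed

lemma walk_answer_not_in_subgroup:
  assumes cos: "consistent p z (Cosets gens H g W)" and a: "a = p (walk_base H W) g"
    and open_coset: "\<not> (length W mod length H = 0 \<and> a \<in> set H)"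
  shows "a \<notin> set H"
proof
  assume aH: "a \<in> set H"
  define r L i k where "r = length H" and "L = length W" and "i = L mod r" and "k = L div r"
  from cos have "r > 0" "L > 0" and closed: "\<forall>x\<in>set H. \<forall>y\<in>set H. p x y \<in> set H"
    and "z \<in> set H" by (auto simp: listed_subgroup_def r_def L_def dest: hd_in_set)
  from aH open_coset have "L mod r \<noteq> 0" by (simp add: r_def L_def)
  then have k: "k = (L - 1) div r" using div_pred[OF \<open>L > 0\<close>, of r] by (simp add: k_def)
  have "H ! i \<in> set H" using \<open>r > 0\<close> by (simp add: i_def r_def)
  moreover have "p (H ! i) (nsum (Suc k) g) = a" using a walk_answer[OF cos] by (simp add: r_def L_def i_def k_def)
  ultimately have "nsum (Suc k) g \<in> set H" using closed_difference[OF closed \<open>z \<in> set H\<close> _ aH] by blast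
  then show False using walk_multiples_outside[OF cos] k by (simp add: r_def L_def)
qed

lemma walk_answer_not_in_walk:
  assumes cos: "consistent p z (Cosets gens H g W)" and a: "a = p (walk_base H W) g"
  shows "a \<notin> set W"
proof
  assume "a \<in> set W"
  define r L i k where "r = length H" and "L = length W" and "i = L mod r" and "k = L div r"
  from cos have "r > 0" "L > 0" "distinct H" and closed: "\<forall>x\<in>set H. \<forall>y\<in>set H. p x y \<in> set H"
    and "z \<in> set H" by (auto simp: listed_subgroup_def r_def L_def dest: hd_in_set)
  have ans: "a = p (H ! i) (nsum (Suc k) g)" using a walk_answer[OF cos] by (simp add: r_def L_def i_def k_def)
  obtain q where q: "q < L" "W ! q = a" using \<open>a \<in> set W\<close> by (auto simp: in_set_conv_nth L_def)
  define i' k' where "i' = q mod r" and "k' = q div r"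
  have ans': "a = p (H ! i') (nsum (Suc k') g)" using cos q by (simp add: i'_def k'_def r_def L_def)
  have "i < r" "i' < r" using \<open>r > 0\<close> by (simp_all add: i_def i'_def)
  have "k' \<le> k" using q by (simp add: k'_def k_def div_le_mono)
  show False
  proof (cases "k' = k")
    case True
    have "q = k' * r + i'" "L = k * r + i" by (simp_all add: i'_def k'_def i_def k_def)
    with q True have "i' < i" by simp
    moreover have "H ! i = H ! i'" using ans ans' True by (metis cancel_right)
    ultimately show False using \<open>distinct H\<close> \<open>i < r\<close> by (simp add: nth_eq_iff_index_eq r_def)
  next
    case False
    with \<open>k' \<le> k\<close> have "nsum (Suc k) g = p (nsum (Suc k') g) (nsum (k - k') g)"
      by (simp add: nsum_add[symmetric])
    with ans ans' have "p (nsum (Suc k') g) (p (H ! i) (nsum (k - k') g)) = p (nsum (Suc k') g) (H ! i')"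
      by (simp add: ac)
    then have "p (H ! i) (nsum (k - k') g) = H ! i'" by (rule cancel_left)
    moreover have "H ! i \<in> set H" "H ! i' \<in> set H" using \<open>i < r\<close> \<open>i' < r\<close> by (simp_all add: r_def)
    ultimately have "nsum (k - k') g \<in> set H"
      using closed_difference[OF closed \<open>z \<in> set H\<close>] by blast
    moreover have "k \<le> (L - 1) div r + 1" using div_pred[OF \<open>L > 0\<close>, of r] by (simp add: k_def)
    then have "k - k' \<le> (L - 1) div r + 1" by (rule le_trans[OF diff_le_self])
    moreover have "1 \<le> k - k'" using False \<open>k' \<le> k\<close> by simp
    ultimately show False using walk_multiples_outside[OF cos, of "k - k'"] by (simp add: r_def L_def)
  qed
qed

lemma walk_extends:
  assumes cos: "consistent p z (Cosets gens H g W)" and a: "a = p (walk_base H W) g"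
    and open_coset: "\<not> (length W mod length H = 0 \<and> a \<in> set H)"
  shows "consistent p z (Cosets gens H g (W @ [a]))"
proof -
  have "a \<notin> set H" "a \<notin> set W"
    using walk_answer_not_in_subgroup[OF cos a open_coset] walk_answer_not_in_walk[OF cos a] .
  moreover have "a = p (H ! (length W mod length H)) (nsum (length W div length H + 1) g)"
    using a walk_answer[OF cos] by simp
  ultimately show ?thesis using cos by (auto simp: nth_append less_Suc_eq)
qed

lemma cosets_step:
  assumes cos: "consistent p z (Cosets gens H g W)" and a: "a = p (walk_base H W) g"
  shows "consistent p z (next_phase (Cosets gens H g W) a)
    \<and> budget (next_phase (Cosets gens H g W) a) < budget (Cosets gens H g W)"
proof (cases "length W mod length H = 0 \<and> a \<in> set H")
  case True
  then have sub: "listed_subgroup p z (H @ W) (gens @ [g])" using walk_closes[OF cos] a by simp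
  have "distinct (H @ W)" using cos by simp
  from distinct_length_le_card[OF this] have "length (H @ W) \<le> card (UNIV :: 'a set)" .
  then show ?thesis using start_cosets_consistent[OF sub] True by simp
next
  case False
  then have ext: "consistent p z (Cosets gens H g (W @ [a]))" by (rule walk_extends[OF cos a])
  then have "distinct (H @ W @ [a])" by simp
  from distinct_length_le_card[OF this] have "length (H @ W @ [a]) \<le> card (UNIV :: 'a set)" .
  with ext False show ?thesis by simp
qed

lemma phase_step:
  assumes "consistent p z s" and "next_query s = Some (b, x, y)"
  shows "consistent p z (next_phase s (answer b x y (p, m)))
    \<and> budget (next_phase s (answer b x y (p, m))) < budget s"
proof (cases s)
  case (Cycle C)
  with assms show ?thesis using cycle_step[of C] by (auto simp: answer_def)
next
  case (Cosets gens H g W)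
  with assms show ?thesis using cosets_step[of gens H g W] by (auto simp: answer_def)
qed (use assms in auto)

end


subsection \<open>Two rings giving the same answers\<close>

fun agree :: "('a \<Rightarrow> 'a \<Rightarrow> 'a) \<Rightarrow> ('a \<Rightarrow> 'a \<Rightarrow> 'a) \<Rightarrow> ('a \<Rightarrow> 'a \<Rightarrow> 'a) \<Rightarrow> ('a \<Rightarrow> 'a \<Rightarrow> 'a)
    \<Rightarrow> 'a phase \<Rightarrow> bool" where
  "agree p1 m1 p2 m2 (Cycle C) \<longleftrightarrow> True"
| "agree p1 m1 p2 m2 (Cosets gens H g W) \<longleftrightarrow> (\<forall>x\<in>set H. \<forall>y\<in>set H. p1 x y = p2 x y)"
| "agree p1 m1 p2 m2 (Products gens k) \<longleftrightarrow> p1 = p2 \<and>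
     (\<forall>(x, y)\<in>set (take k (List.product gens gens)). m1 x y = m2 x y)"
| "agree p1 m1 p2 m2 (Finished gens) \<longleftrightarrow> p1 = p2 \<and> (\<forall>x\<in>set gens. \<forall>y\<in>set gens. m1 x y = m2 x y)"

lemma start_cosets_agree:
  "\<forall>x\<in>set H. \<forall>y\<in>set H. p1 x y = p2 x y \<Longrightarrow> agree p1 m1 p2 m2 (start_cosets H gens)"
  by (auto simp: start_cosets_def Let_def fun_eq_iff)

text \<open>Both rings see the same closed cycle \<open>g, 2\<cdot>g, \<dots>, j\<cdot>g\<close>; as sums of its entries are again
  multiples of \<open>g\<close>, read off modulo \<open>j\<close>, both additions agree on it.\<close>

lemma cycle_sums_agree:
  assumes G1: "fin_comm_group p1 z1" and G2: "fin_comm_group p2 z2"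
    and cyc1: "consistent p1 z1 (Cycle C)" and cyc2: "consistent p2 z2 (Cycle C)"
    and order1: "multiple p1 z1 (length C) (hd C) = z1"
    and order2: "multiple p2 z2 (length C) (hd C) = z2"
  shows "\<forall>x\<in>set C. \<forall>y\<in>set C. p1 x y = p2 x y"
proof (intro ballI)
  define g j where "g = hd C" and "j = length C"
  from cyc1 have "j > 0" and C1: "\<And>i. i < j \<Longrightarrow> C ! i = multiple p1 z1 (Suc i) g"
    unfolding g_def j_def by auto
  from cyc2 have C2: "\<And>i. i < j \<Longrightarrow> C ! i = multiple p2 z2 (Suc i) g"
    unfolding g_def j_def by auto
  have same_multiples: "multiple p1 z1 t g = multiple p2 z2 t g" if "t < j" for t
  proof (cases t)
    case 0
    have "z1 = z2" using order1 order2 C1[of "j - 1"] C2[of "j - 1"] \<open>j > 0\<close> by (simp add: g_def j_def)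
    then show ?thesis using 0 by simp
  next
    case (Suc t') then show ?thesis using C1[of t'] C2[of t'] that by simp
  qed
  fix x y assume "x \<in> set C" "y \<in> set C"
  then obtain i i' where i: "i < j" "x = C ! i" "i' < j" "y = C ! i'"
    by (auto simp: in_set_conv_nth j_def)
  define s where "s = Suc i + Suc i'"
  have "p1 x y = multiple p1 z1 s g"
    using i C1 fin_comm_group.nsum_add[OF G1, of "Suc i" "Suc i'" g] by (simp add: s_def)
  also have "\<dots> = multiple p1 z1 (s mod j) g"
    using fin_comm_group.nsum_mod[OF G1 order1[folded g_def j_def]] .
  also have "\<dots> = multiple p2 z2 (s mod j) g" using same_multiples \<open>j > 0\<close> by simp
  also have "\<dots> = multiple p2 z2 s g"
    using fin_comm_group.nsum_mod[OF G2 order2[folded g_def j_def]] by simp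
  also have "\<dots> = p2 x y"
    using i C2 fin_comm_group.nsum_add[OF G2, of "Suc i" "Suc i'" g] by (simp add: s_def)
  finally show "p1 x y = p2 x y" .
qed

lemma cycle_agree:
  assumes G1: "fin_comm_group p1 z1" and G2: "fin_comm_group p2 z2"
    and cyc1: "consistent p1 z1 (Cycle C)" and cyc2: "consistent p2 z2 (Cycle C)"
    and a1: "a = p1 (last C) (hd C)" and a2: "a = p2 (last C) (hd C)"
  shows "agree p1 m1 p2 m2 (next_phase (Cycle C) a)"
proof (cases "a \<in> set C")
  case True
  have "multiple p1 z1 (length C) (hd C) = z1" "multiple p2 z2 (length C) (hd C) = z2"
    using fin_comm_group.cycle_closes[OF G1 cyc1] fin_comm_group.cycle_closes[OF G2 cyc2] True a1 a2
    by simp_all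
  with cycle_sums_agree[OF G1 G2 cyc1 cyc2] have "\<forall>x\<in>set C. \<forall>y\<in>set C. p1 x y = p2 x y" by simp
  moreover have "set (last C # butlast C) = set C"
  proof -
    from cyc1 have "butlast C @ [last C] = C" by simp
    moreover have "set (last C # butlast C) = set (butlast C @ [last C])" by simp
    ultimately show ?thesis by simp
  qed
  ultimately have "\<forall>x\<in>set (last C # butlast C). \<forall>y\<in>set (last C # butlast C). p1 x y = p2 x y"
    by simp
  then have "agree p1 m1 p2 m2 (start_cosets (last C # butlast C) gens)" for gens
    by (rule start_cosets_agree)
  then show ?thesis using True by simp
qed simp

text \<open>In the coset phase both rings see the same walk, so they agree on the sums \<open>h + k\<cdot>g\<close> it
  lists; when the walk closes, \<open>coset_sum\<close> computes every sum in the new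
  subgroup from these and from sums in \<open>H\<close>, so both additions agree on the new subgroup.\<close>

lemma walk_entries_agree:
  assumes G1: "fin_comm_group p1 z1" and G2: "fin_comm_group p2 z2"
    and cos1: "consistent p1 z1 (Cosets gens H g W)" and cos2: "consistent p2 z2 (Cosets gens H g W)"
    and full: "length W mod length H = 0"
    and h: "h \<in> set H" and k: "k \<le> length W div length H"
  shows "p1 h (multiple p1 z1 k g) = p2 h (multiple p2 z2 k g)"
proof (cases "k = 0")
  case True
  from cos1 cos2 have "z1 = z2" by (simp add: listed_subgroup_def)
  with True show ?thesis using fin_comm_group.right_zero[OF G1] fin_comm_group.right_zero[OF G2] by simp
next
  case False
  define r L where "r = length H" and "L = length W"
  obtain i where i: "i < r" "H ! i = h" using h by (auto simp: r_def in_set_conv_nth)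
  have L: "L = (L div r) * r" using full div_mult_mod_eq[of L r] by (simp add: r_def L_def)
  have "(k - 1) * r + i < k * r" using i False by (cases k) auto
  also have "\<dots> \<le> (L div r) * r" using k by (intro mult_le_mono1) (simp add: r_def L_def)
  also have "\<dots> = L" using L by simp
  finally have q: "(k - 1) * r + i < L" .
  show ?thesis
    using fin_comm_group.walk_entry[OF G1 cos1, of i k] fin_comm_group.walk_entry[OF G2 cos2, of i k]
      i q False by (simp add: r_def L_def)
qed

text \<open>Writing two elements of the new subgroup as \<open>h + k\<cdot>g\<close>, both rings compute their sum by
  the same normal form.\<close>

lemma walk_union_agree:
  assumes G1: "fin_comm_group p1 z1" and G2: "fin_comm_group p2 z2"
    and cos1: "consistent p1 z1 (Cosets gens H g W)" and cos2: "consistent p2 z2 (Cosets gens H g W)"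
    and agreeH: "agree p1 m1 p2 m2 (Cosets gens H g W)"
    and a1: "a = p1 (walk_base H W) g" and a2: "a = p2 (walk_base H W) g"
    and full: "length W mod length H = 0" and closes: "a \<in> set H"
  shows "\<forall>u\<in>set (H @ W). \<forall>v\<in>set (H @ W). p1 u v = p2 u v"
proof (intro ballI)
  define j where "j = length W div length H"
  from cos1 cos2 have "H ! 0 = z1" "H ! 0 = z2" and closed: "\<forall>x\<in>set H. \<forall>y\<in>set H. p1 x y \<in> set H"
    by (auto simp: listed_subgroup_def hd_conv_nth)
  from agreeH have sumH: "\<And>x y. x \<in> set H \<Longrightarrow> y \<in> set H \<Longrightarrow> p1 x y = p2 x y" by simp
  have c1: "a = multiple p1 z1 (Suc j) g"
    using a1 fin_comm_group.walk_answer[OF G1 cos1] full closes \<open>H ! 0 = z1\<close> fin_comm_group.left_zero[OF G1]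
    by (simp add: j_def)
  have c2: "a = multiple p2 z2 (Suc j) g"
    using a2 fin_comm_group.walk_answer[OF G2 cos2] full closes \<open>H ! 0 = z2\<close> fin_comm_group.left_zero[OF G2]
    by (simp add: j_def)
  note entries = walk_entries_agree[OF G1 G2 cos1 cos2 full, folded j_def]
  note members = fin_comm_group.walk_members[OF G1 cos1 full, folded j_def]
  fix u v assume "u \<in> set (H @ W)" "v \<in> set (H @ W)"
  then obtain h1 k1 h2 k2 where u: "h1 \<in> set H" "k1 \<le> j" "u = p1 h1 (multiple p1 z1 k1 g)"
    and v: "h2 \<in> set H" "k2 \<le> j" "v = p1 h2 (multiple p1 z1 k2 g)"
    unfolding members by blast
  have u2: "u = p2 h1 (multiple p2 z2 k1 g)" and v2: "v = p2 h2 (multiple p2 z2 k2 g)"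
    using u v entries by simp_all
  have h12: "p1 h1 h2 = p2 h1 h2" "p2 h1 h2 \<in> set H" using u v closed sumH by auto
  then have "p1 (p2 h1 h2) a = p2 (p2 h1 h2) a" "p2 (p2 h1 h2) a \<in> set H"
    using full closes closed sumH by auto
  moreover have "k1 + k2 - Suc j \<le> j" using u v by simp
  ultimately have same_normal_form:
    "(if k1 + k2 \<le> j then p1 (p1 h1 h2) (multiple p1 z1 (k1 + k2) g)
      else p1 (p1 (p1 h1 h2) (multiple p1 z1 (Suc j) g)) (multiple p1 z1 (k1 + k2 - Suc j) g))
   = (if k1 + k2 \<le> j then p2 (p2 h1 h2) (multiple p2 z2 (k1 + k2) g)
      else p2 (p2 (p2 h1 h2) (multiple p2 z2 (Suc j) g)) (multiple p2 z2 (k1 + k2 - Suc j) g))"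
    using h12 entries by (simp add: c1[symmetric] c2[symmetric])
  have "p1 u v = (if k1 + k2 \<le> j then p1 (p1 h1 h2) (multiple p1 z1 (k1 + k2) g)
      else p1 (p1 (p1 h1 h2) (multiple p1 z1 (Suc j) g)) (multiple p1 z1 (k1 + k2 - Suc j) g))"
    unfolding u(3) v(3) by (rule fin_comm_group.coset_sum[OF G1 u(2) v(2)])
  also note same_normal_form
  also have "(if k1 + k2 \<le> j then p2 (p2 h1 h2) (multiple p2 z2 (k1 + k2) g)
      else p2 (p2 (p2 h1 h2) (multiple p2 z2 (Suc j) g)) (multiple p2 z2 (k1 + k2 - Suc j) g))
    = p2 u v"
    unfolding u2 v2 by (rule fin_comm_group.coset_sum[OF G2 u(2) v(2), symmetric])
  finally show "p1 u v = p2 u v" .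
qed

lemma walk_agree:
  assumes G1: "fin_comm_group p1 z1" and G2: "fin_comm_group p2 z2"
    and cos1: "consistent p1 z1 (Cosets gens H g W)" and cos2: "consistent p2 z2 (Cosets gens H g W)"
    and agreeH: "agree p1 m1 p2 m2 (Cosets gens H g W)"
    and a1: "a = p1 (walk_base H W) g" and a2: "a = p2 (walk_base H W) g"
  shows "agree p1 m1 p2 m2 (next_phase (Cosets gens H g W) a)"
proof (cases "length W mod length H = 0 \<and> a \<in> set H")
  case True
  then have "agree p1 m1 p2 m2 (start_cosets (H @ W) (gens @ [g]))"
    by (intro start_cosets_agree walk_union_agree[OF G1 G2 cos1 cos2 agreeH a1 a2]) simp_all
  then show ?thesis using True by simp
qed (use agreeH in auto)

lemma products_agree:
  assumes prod: "consistent p1 z1 (Products gens k)" and agreeP: "agree p1 m1 p2 m2 (Products gens k)"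
    and same: "m1 (fst (List.product gens gens ! k)) (snd (List.product gens gens ! k))
      = m2 (fst (List.product gens gens ! k)) (snd (List.product gens gens ! k))"
  shows "agree p1 m1 p2 m2 (next_phase (Products gens k) a)"
proof -
  have k: "k < length (List.product gens gens)" using prod by simp
  then have "take (Suc k) (List.product gens gens) = take k (List.product gens gens) @ [List.product gens gens ! k]"
    by (rule take_Suc_conv_app_nth)
  then have products: "\<forall>(x, y)\<in>set (take (Suc k) (List.product gens gens)). m1 x y = m2 x y"
    using agreeP same by auto
  show ?thesis
  proof (cases "Suc k < length gens * length gens")
    case False
    with k have "take (Suc k) (List.product gens gens) = List.product gens gens" by simp
    then show ?thesis using False products agreeP by auto
  qed (use products agreeP in simp)
qed

definition joint :: "('a::finite \<Rightarrow> 'a \<Rightarrow> 'a) \<Rightarrow> 'a \<Rightarrow> ('a \<Rightarrow> 'a \<Rightarrow> 'a) \<Rightarrow> ('a \<Rightarrow> 'a \<Rightarrow> 'a) \<Rightarrow> 'a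
    \<Rightarrow> ('a \<Rightarrow> 'a \<Rightarrow> 'a) \<Rightarrow> 'a phase \<Rightarrow> bool" where
  "joint p1 z1 m1 p2 z2 m2 s \<longleftrightarrow> consistent p1 z1 s \<and> consistent p2 z2 s \<and> agree p1 m1 p2 m2 s"

lemma joint_step:
  assumes G1: "fin_comm_group p1 z1" and G2: "fin_comm_group p2 z2"
    and J: "joint p1 z1 m1 p2 z2 m2 s" and q: "next_query s = Some (b, x, y)"
    and same: "answer b x y (p1, m1) = answer b x y (p2, m2)"
  shows "joint p1 z1 m1 p2 z2 m2 (next_phase s (answer b x y (p1, m1)))"
proof -
  from J have I1: "consistent p1 z1 s" and I2: "consistent p2 z2 s" and A: "agree p1 m1 p2 m2 s"
    unfolding joint_def by auto
  have "consistent p1 z1 (next_phase s (answer b x y (p1, m1)))"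
    using fin_comm_group.phase_step[OF G1 I1 q] by simp
  moreover have "consistent p2 z2 (next_phase s (answer b x y (p1, m1)))"
    using fin_comm_group.phase_step[OF G2 I2 q] same by simp
  moreover have "agree p1 m1 p2 m2 (next_phase s (answer b x y (p1, m1)))"
  proof (cases s)
    case (Cycle C)
    with q same have "answer b x y (p1, m1) = p1 (last C) (hd C)"
      and "answer b x y (p1, m1) = p2 (last C) (hd C)" by (auto simp: answer_def)
    from cycle_agree[OF G1 G2 I1[unfolded Cycle] I2[unfolded Cycle] this] show ?thesis
      unfolding Cycle .
  next
    case (Cosets gens H g W)
    with q same have "answer b x y (p1, m1) = p1 (walk_base H W) g"
      and "answer b x y (p1, m1) = p2 (walk_base H W) g" by (auto simp: answer_def)
    from walk_agree[OF G1 G2 I1[unfolded Cosets] I2[unfolded Cosets] A[unfolded Cosets] this]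
    show ?thesis unfolding Cosets .
  next
    case (Products gens k)
    with q same have "m1 (fst (List.product gens gens ! k)) (snd (List.product gens gens ! k))
      = m2 (fst (List.product gens gens ! k)) (snd (List.product gens gens ! k))"
      by (auto simp: answer_def)
    from products_agree[OF I1[unfolded Products] A[unfolded Products] this] show ?thesis
      unfolding Products .
  qed (use q in simp)
  ultimately show ?thesis unfolding joint_def by blast
qed

text \<open>A ring multiplication is determined by its values on a spanning set of generators, by
  distributivity; hence two rings agreeing at the end of the strategy are equal.\<close>

lemma mult_determined_by_generators:
  assumes R1: "fin_ring p z m1" and R2: "fin_ring p z m2"
    and spans: "span p z G = UNIV" and gens: "\<forall>x\<in>G. \<forall>y\<in>G. m1 x y = m2 x y"
  shows "m1 = m2"
proof -
  have left_gen: "m1 g y = m2 g y" if g: "g \<in> G" and "y \<in> span p z G" for g y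
    using \<open>y \<in> span p z G\<close>
  proof (induction rule: span.induct)
    case span_zero then show ?case using fin_ring.mult_zero_right[OF R1] fin_ring.mult_zero_right[OF R2] by simp
  next
    case (span_gen h) then show ?case using gens g by simp
  next
    case (span_add u v) then show ?case using fin_ring.right_distrib[OF R1] fin_ring.right_distrib[OF R2] by simp
  qed
  have "m1 x y = m2 x y" if "x \<in> span p z G" for x y
    using that
  proof (induction rule: span.induct)
    case span_zero then show ?case using fin_ring.mult_zero_left[OF R1] fin_ring.mult_zero_left[OF R2] by simp
  next
    case (span_gen h) then show ?case using left_gen spans by simp
  next
    case (span_add u v) then show ?case using fin_ring.left_distrib[OF R1] fin_ring.left_distrib[OF R2] by simp
  qed
  with spans show ?thesis by (auto simp: fun_eq_iff)
qed

lemma finished_agree: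
  assumes R1: "fin_ring p1 z1 m1" and R2: "fin_ring p2 z2 m2"
    and J: "joint p1 z1 m1 p2 z2 m2 (Finished gens)"
  shows "(p1, m1) = (p2, m2)"
proof -
  from J have "p1 = p2" and spans: "span p1 z1 (set gens) = UNIV"
    and gens: "\<forall>x\<in>set gens. \<forall>y\<in>set gens. m1 x y = m2 x y" by (auto simp: joint_def)
  have G1: "fin_comm_group p1 z1" and G2: "fin_comm_group p2 z2"
    using R1 R2 fin_ring.axioms(1) by blast+
  have "z2 = z1" using fin_comm_group.zero_unique[OF G1, of z2] fin_comm_group.left_zero[OF G2] \<open>p1 = p2\<close> by simp
  with R2 \<open>p1 = p2\<close> have "fin_ring p1 z1 m2" by simp
  from mult_determined_by_generators[OF R1 this spans gens] \<open>p1 = p2\<close> show ?thesis by simp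
qed


text \<open>The strategy starts cycling from an arbitrary element.\<close>

definition initial_phase :: "'a phase" where
  "initial_phase = Cycle [undefined]"

lemma initial_phase_consistent: "fin_comm_group p z \<Longrightarrow> consistent p z initial_phase"
  by (simp add: initial_phase_def multiple_Suc fin_comm_group.left_zero)

lemma budget_initial_phase:
  "budget (initial_phase :: ('a::finite) phase) = card (UNIV :: 'a set) + log_budget (card (UNIV :: 'a set))"
  by (simp add: initial_phase_def)

lemma ring_run_length:
  assumes "(p, m) \<in> (ring_ops :: ('a::finite) ops set)"
  shows "length (strategy_path next_query next_phase F initial_phase (p, m))
    \<le> card (UNIV :: 'a set) + log_budget (card (UNIV :: 'a set))"
proof -
  obtain z where "fin_ring p z m" using ring_ops_fin_ring[OF assms] by blast
  then have G: "fin_comm_group p z" by (rule fin_ring.axioms(1))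
  have "length (strategy_path next_query next_phase F initial_phase (p, m))
      \<le> budget (initial_phase :: 'a phase)"
  proof (rule strategy_run_length[where I = "consistent p z" and \<mu> = budget])
    show "consistent p z initial_phase" by (rule initial_phase_consistent[OF G])
    fix s b x y assume "consistent p z s" "next_query s = Some (b, x, y)"
    then show "consistent p z (next_phase s (answer b x y (p, m)))
      \<and> budget (next_phase s (answer b x y (p, m))) < budget s"
      by (rule fin_comm_group.phase_step[OF G])
  qed
  then show ?thesis by (simp add: budget_initial_phase)
qed

lemma ring_paths_inj:
  assumes "card (UNIV :: 'a set) + log_budget (card (UNIV :: 'a set)) \<le> F"
  shows "inj_on (strategy_path next_query next_phase F initial_phase) (ring_ops :: ('a::finite) ops set)"
proof (rule inj_onI)
  fix r1 r2 assume r1: "r1 \<in> (ring_ops :: 'a ops set)" and r2: "r2 \<in> (ring_ops :: 'a ops set)"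
    and same: "strategy_path next_query next_phase F initial_phase r1
      = strategy_path next_query next_phase F initial_phase r2"
  obtain p1 m1 p2 m2 where r: "r1 = (p1, m1)" "r2 = (p2, m2)" by (cases r1, cases r2) auto
  obtain z1 z2 where R1: "fin_ring p1 z1 m1" and R2: "fin_ring p2 z2 m2"
    using ring_ops_fin_ring r1 r2 r by metis
  then have G1: "fin_comm_group p1 z1" and G2: "fin_comm_group p2 z2" by (simp_all add: fin_ring.axioms(1))
  define e where "e = strategy_end next_query next_phase F initial_phase r1"
  have "joint p1 z1 m1 p2 z2 m2 e"
  proof -
    have "joint p1 z1 m1 p2 z2 m2 initial_phase"
      using initial_phase_consistent[OF G1] initial_phase_consistent[OF G2]
      by (simp add: joint_def initial_phase_def)
    from strategy_common_run[where P = "joint p1 z1 m1 p2 z2 m2", OF same this] joint_step[OF G1 G2]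
    show ?thesis unfolding e_def r by blast
  qed
  moreover have "next_query e = None"
    unfolding e_def r
  proof (rule strategy_run_stops[where I = "consistent p1 z1" and \<mu> = budget])
    show "consistent p1 z1 initial_phase" by (rule initial_phase_consistent[OF G1])
    show "budget (initial_phase :: 'a phase) \<le> F" using assms by (simp add: budget_initial_phase)
    fix s b x y assume "consistent p1 z1 s" "next_query s = Some (b, x, y)"
    then show "consistent p1 z1 (next_phase s (answer b x y (p1, m1)))
      \<and> budget (next_phase s (answer b x y (p1, m1))) < budget s"
      by (rule fin_comm_group.phase_step[OF G1])
  qed
  then obtain gens where "e = Finished gens" by (cases e) auto
  ultimately show "r1 = r2" using finished_agree[OF R1 R2] r by simp
qed

theorem mainTheorem8:
  fixes n :: nat
  assumes "n = card (UNIV :: ('a::finite) set)"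
  shows "\<exists>T :: 'a qtree. product_recovering T (ring_ops :: 'a ops set) \<and>
           (\<forall>opr \<in> (ring_ops :: 'a ops set).
              real (queries_used T opr) \<le> real n + (log 2 (real n))^2)"
proof -
  define F where "F = n + log_budget n"
  define T where "T = strategy_tree next_query next_phase (Suc F) initial_phase (ring_ops :: 'a ops set)"
  have inj: "inj_on (strategy_path next_query next_phase (Suc F) initial_phase) (ring_ops :: 'a ops set)"
    by (rule ring_paths_inj) (simp add: F_def assms)
  have starts: "next_query (initial_phase :: 'a phase) \<noteq> None" by (simp add: initial_phase_def)
  have "real (queries_used T r) \<le> real n + (log 2 (real n))^2" if "r \<in> ring_ops" for r
  proof -
    obtain p m where r: "r = (p, m)" by (cases r)
    have "queries_used T r = length (strategy_path next_query next_phase (Suc F) initial_phase r)"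
      unfolding T_def by (rule strategy_tree_recovering(2)[OF inj starts that])
    also have "\<dots> \<le> n + log_budget n"
      unfolding r assms by (rule ring_run_length[OF that[unfolded r]])
    finally have "queries_used T r \<le> n + log_budget n" .
    moreover have "n \<ge> 1" using assms by (simp add: Suc_le_eq finite_UNIV_card_ge_0)
    ultimately show ?thesis using log_budget_le[of n] by linarith
  qed
  with strategy_tree_recovering(1)[OF inj starts] show ?thesis unfolding T_def by blast
qed

end
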